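(* Let $X$ be a Hilbert space with orthonormal basis $(e_n)_{n\in\mathbb{N}}$ and let $(\lambda_n)_{n\in\mathbb{N}}\subset\{z\in\mathbb{C}:\Re z<0\}$ be such that $(\Re\lambda_n)$ is monotonically decreasing with $\lim_{n\to\infty}\Re\lambda_n=-\infty$ and $|\operatorname{Im}\lambda_n|\le k|\Re\lambda_n|$ for some $k>0$ and all $n$. Let $Ae_n=\lambda_ne_n$ with $D(A)=\{x=\sum_nx_ne_n:\sum_n|\lambda_nx_n|^2<\infty\}$. Let $U:=X$ and $B:=A_{-1}\in\mathcal{L}(U,X_{-1})$. Then: (i) for every $u\in U$, the operator $Bu\in\mathcal{L}(\mathbb{C},X_{-1})$, $z\mapsto zBu$, is $L^\infty$-admissible for $A$; (ii) $B$ is not $L^\infty$-admissible for $A$; (iii) $\sup_{\Re\lambda>0}\|R(\lambda,A_{-1})B\|_{\mathcal{L}(U,X)}<\infty$.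
   Context: $X_{-1}$ is the completion of $X$ w.r.t. $\|(\beta-A)^{-1}\cdot\|$, $\beta\in\rho(A)$; $A_{-1}$, $T_{-1}$ are the extensions of $A$ and its semigroup $T$ to $X_{-1}$; $R(\lambda,A_{-1})=(\lambda-A_{-1})^{-1}$. An operator $B\in\mathcal{L}(U,X_{-1})$ is $L^\infty$-admissible if for every $t>0$ the map $u\mapsto\int_0^tT_{-1}(s)Bu(s)ds$ sends $L^\infty(0,t;U)$ into $X$. *)

theory Defs
  imports "HOL-Analysis.Analysis"
begin

text \<open>Concrete model: X is identified (isometrically) with l2(nat) over the complex
numbers via the orthonormal basis (e_n); x corresponds to its coefficient sequence.
The diagonal operator A e_n = lam n e_n, its extension A_{-1}, the extrapolated
semigroup T_{-1}(s) (acting as multiplication by exp(s lam n)) and the resolvent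
R(mu, A_{-1}) (multiplication by 1/(mu - lam n)) all act coordinatewise.  Elements
of X_{-1} are represented by their coefficient sequences as well.\<close>

definition is_ell2 :: "(nat \<Rightarrow> complex) \<Rightarrow> bool" where
  "is_ell2 x \<longleftrightarrow> summable (\<lambda>n. (cmod (x n))\<^sup>2)"

definition ell2_norm :: "(nat \<Rightarrow> complex) \<Rightarrow> real" where
  "ell2_norm x = sqrt (\<Sum>n. (cmod (x n))\<^sup>2)"

text \<open>Representatives of elements of L^infty(0,t;U) for U = l2 (coordinatewise
measurable, which for separable l2 is equivalent to strong measurability, and
essentially bounded in l2-norm).\<close>
definition Linf_ell2 :: "real \<Rightarrow> (real \<Rightarrow> nat \<Rightarrow> complex) \<Rightarrow> bool" where
  "Linf_ell2 t u \<longleftrightarrow>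
     (\<forall>n. set_borel_measurable lborel {0..t} (\<lambda>s. u s n)) \<and>
     (\<exists>M. AE s in lborel. s \<in> {0..t} \<longrightarrow> is_ell2 (u s) \<and> ell2_norm (u s) \<le> M)"

definition Linf_scalar :: "real \<Rightarrow> (real \<Rightarrow> complex) \<Rightarrow> bool" where
  "Linf_scalar t v \<longleftrightarrow>
     set_borel_measurable lborel {0..t} v \<and> (\<exists>M. AE s in lborel. s \<in> {0..t} \<longrightarrow> cmod (v s) \<le> M)"

text \<open>Coefficients of the X_{-1}-valued integral  int_0^t T_{-1}(s) B u(s) ds, where the
control operator B : U \<rightarrow> X_{-1} is given by the coefficient map Bc.\<close>
definition ctrl_integral ::
  "(nat \<Rightarrow> complex) \<Rightarrow> ('u \<Rightarrow> nat \<Rightarrow> complex) \<Rightarrow> real \<Rightarrow> (real \<Rightarrow> 'u) \<Rightarrow> nat \<Rightarrow> complex" where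
  "ctrl_integral lam Bc t u n = (LINT s:{0..t}|lborel. exp (complex_of_real s * lam n) * Bc (u s) n)"

definition Linf_admissible ::
  "(nat \<Rightarrow> complex) \<Rightarrow> ('u \<Rightarrow> nat \<Rightarrow> complex) \<Rightarrow> (real \<Rightarrow> (real \<Rightarrow> 'u) \<Rightarrow> bool) \<Rightarrow> bool" where
  "Linf_admissible lam Bc Linf \<longleftrightarrow>
     (\<forall>t>0. \<forall>u. Linf t u \<longrightarrow> is_ell2 (ctrl_integral lam Bc t u))"

definition Bop :: "(nat \<Rightarrow> complex) \<Rightarrow> (nat \<Rightarrow> complex) \<Rightarrow> nat \<Rightarrow> complex" where
  "Bop lam x n = lam n * x n"

definition resolvent_m1 :: "(nat \<Rightarrow> complex) \<Rightarrow> complex \<Rightarrow> (nat \<Rightarrow> complex) \<Rightarrow> nat \<Rightarrow> complex" where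
  "resolvent_m1 lam mu y n = y n / (mu - lam n)"

end

theory Submission
  imports Defs
begin

(* Parts (i) and (iii) are coordinatewise estimates: the n-th coefficient of the control
   integral is at most M |lam n| |u n| / |Re (lam n)|, and that of R(mu, A_{-1}) A_{-1} x is
   |lam n| |x n| / |mu - lam n| <= |lam n| |x n| / |Re (lam n)|; the sector condition bounds
   |lam n| / |Re (lam n)| by 1 + k.
   For (ii) choose a subsequence g along which r = |Re lam| grows at least by the factor 4,
   so that the windows I j = [1 / r (g j), 2 / r (g j)] in [0, 1] are pairwise disjoint.
   The control that on I j excites only the coordinate g j, with modulus one and the phase
   of the conjugate of exp (s lam) lam, lies in L^infty(0,1;l2); but the (g j)-th coefficient
   of its control integral is the integral over I j of |exp (s lam) lam|, which is at least
   exp (-2), so the integral is not in l2. *)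

lemma ell2_pointwise_dominated:
  fixes x y :: "nat \<Rightarrow> complex"
  assumes x: "is_ell2 x" and c: "0 \<le> c" and le: "\<And>n. cmod (y n) \<le> c * cmod (x n)"
  shows "is_ell2 y" and "ell2_norm y \<le> c * ell2_norm x"
proof -
  have sx: "summable (\<lambda>n. (cmod (x n))\<^sup>2)" using x by (simp add: is_ell2_def)
  have le2: "(cmod (y n))\<^sup>2 \<le> c\<^sup>2 * (cmod (x n))\<^sup>2" for n
    using power_mono[OF le[of n] norm_ge_zero, of 2] by (simp add: power_mult_distrib)
  have sx2: "summable (\<lambda>n. c\<^sup>2 * (cmod (x n))\<^sup>2)" using sx by (rule summable_mult)
  have sy: "summable (\<lambda>n. (cmod (y n))\<^sup>2)"
    by (rule summable_comparison_test'[OF sx2, of 0]) (use le2 in auto)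
  then show "is_ell2 y" by (simp add: is_ell2_def)
  have "(\<Sum>n. (cmod (y n))\<^sup>2) \<le> c\<^sup>2 * (\<Sum>n. (cmod (x n))\<^sup>2)"
    using suminf_le[OF le2 sy sx2] suminf_mult[OF sx] by simp
  then have "sqrt (\<Sum>n. (cmod (y n))\<^sup>2) \<le> sqrt (c\<^sup>2 * (\<Sum>n. (cmod (x n))\<^sup>2))" by simp
  then show "ell2_norm y \<le> c * ell2_norm x"
    using c by (simp add: ell2_norm_def real_sqrt_mult)
qed

lemma ell2_single:
  fixes x :: "nat \<Rightarrow> complex"
  assumes "\<And>n. n \<noteq> m \<Longrightarrow> x n = 0" and "cmod (x m) \<le> 1"
  shows "is_ell2 x" and "ell2_norm x \<le> 1"
proof -
  have "(\<lambda>n. (cmod (x n))\<^sup>2) = (\<lambda>n. if n = m then (cmod (x n))\<^sup>2 else 0)"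
    using assms(1) by auto
  then have "(\<lambda>n. (cmod (x n))\<^sup>2) sums (cmod (x m))\<^sup>2" by (metis sums_single)
  moreover have "(cmod (x m))\<^sup>2 \<le> 1" using assms(2) by (simp add: power_le_one)
  ultimately show "is_ell2 x" and "ell2_norm x \<le> 1"
    using assms(2) by (auto simp: is_ell2_def ell2_norm_def sums_iff)
qed

lemma is_ell2_LIMSEQ_zero:
  assumes "is_ell2 x"
  shows "x \<longlonglongrightarrow> 0"
proof -
  have "(\<lambda>n. (cmod (x n))\<^sup>2) \<longlonglongrightarrow> 0"
    using assms unfolding is_ell2_def by (rule summable_LIMSEQ_zero)
  then have "(\<lambda>n. sqrt ((cmod (x n))\<^sup>2)) \<longlonglongrightarrow> 0"
    using tendsto_real_sqrt by fastforce
  then show ?thesis by (simp add: tendsto_norm_zero_iff)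
qed

lemma norm_div_abs_Re_le_sector:
  assumes "Re l \<noteq> 0" and "\<bar>Im l\<bar> \<le> k * \<bar>Re l\<bar>"
  shows "cmod l / \<bar>Re l\<bar> \<le> 1 + k"
  using cmod_le[of l] assms by (simp add: divide_simps algebra_simps)

lemma mult_cnj_sgn: "z * cnj (sgn z) = complex_of_real (cmod z)"
proof (cases "z = 0")
  case False
  have "z * cnj (sgn z) = z * cnj z / complex_of_real (cmod z)"
    by (simp add: sgn_div_norm divide_inverse scaleR_conv_of_real mult.commute)
  also have "\<dots> = complex_of_real (cmod z)"
    using False by (simp add: complex_norm_square[symmetric] power2_eq_square)
  finally show ?thesis .
qed simp

lemma set_integral_exp_neg_le:
  fixes r t :: real
  assumes r: "0 < r" and t: "0 \<le> t"
  shows "(LINT s:{0..t}|lborel. exp (- (r * s))) \<le> 1 / r"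
proof -
  have "(LINT s:{0..t}|lborel. exp (- (r * s))) = - exp (- (r * t)) / r - (- exp (- (r * 0)) / r)"
    unfolding set_lebesgue_integral_def
  proof (rule integral_FTC_atLeastAtMost[OF t])
    show "continuous_on {0..t} (\<lambda>s. exp (- (r * s)))" by (intro continuous_intros)
    fix s show "((\<lambda>a. - exp (- (r * a)) / r) has_vector_derivative exp (- (r * s))) (at s within {0..t})"
      unfolding has_real_derivative_iff_has_vector_derivative[symmetric]
      using r by (auto intro!: derivative_eq_intros)
  qed
  also have "\<dots> \<le> 1 / r" using r by (simp add: divide_simps)
  finally show ?thesis .
qed

lemma norm_set_integral_exp_mult_le:
  fixes l :: complex and f :: "real \<Rightarrow> complex"
  assumes l: "Re l < 0" and t: "0 \<le> t" and M: "0 \<le> M"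
    and f: "AE s in lborel. s \<in> {0..t} \<longrightarrow> cmod (f s) \<le> M"
  shows "cmod (LINT s:{0..t}|lborel. exp (complex_of_real s * l) * f s) \<le> M / \<bar>Re l\<bar>"
proof -
  define r where "r = \<bar>Re l\<bar>"
  have r: "0 < r" using l by (simp add: r_def)
  have "cmod (LINT s:{0..t}|lborel. exp (complex_of_real s * l) * f s)
      \<le> (LINT s|lborel. norm (indicator {0..t} s *\<^sub>R (exp (complex_of_real s * l) * f s)))"
    unfolding set_lebesgue_integral_def by (rule integral_norm_bound)
  also have "\<dots> \<le> (LINT s|lborel. indicator {0..t} s *\<^sub>R (M * exp (- (r * s))))"
  proof (rule integral_mono_AE')
    show "integrable lborel (\<lambda>s. indicator {0..t} s *\<^sub>R (M * exp (- (r * s))))"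
      using borel_integrable_atLeastAtMost'[of 0 t "\<lambda>s. M * exp (- (r * s))"]
      unfolding set_integrable_def by (simp add: continuous_intros)
    show "AE s in lborel. 0 \<le> indicator {0..t} s *\<^sub>R (M * exp (- (r * s)))"
      using M by simp
    show "AE s in lborel. norm (indicator {0..t} s *\<^sub>R (exp (complex_of_real s * l) * f s))
        \<le> indicator {0..t} s *\<^sub>R (M * exp (- (r * s)))"
      using f
    proof eventually_elim
      case (elim s)
      have "cmod (exp (complex_of_real s * l)) = exp (- (r * s))"
        using l by (simp add: r_def)
      then show ?case
        using elim by (auto simp: norm_mult indicator_def intro!: mult_right_mono)
    qed
  qed
  also have "\<dots> = M * (LINT s:{0..t}|lborel. exp (- (r * s)))"
    unfolding set_lebesgue_integral_def by (simp add: mult.left_commute)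
  also have "\<dots> \<le> M * (1 / r)"
    using set_integral_exp_neg_le[OF r t] M by (rule mult_left_mono)
  finally show ?thesis by (simp add: r_def)
qed

lemma norm_div_diff_le_sector:
  fixes l mu :: complex
  assumes l: "Re l < 0" and mu: "0 < Re mu" and sector: "\<bar>Im l\<bar> \<le> k * \<bar>Re l\<bar>"
  shows "cmod l / cmod (mu - l) \<le> 1 + k"
proof -
  have pos: "0 < \<bar>Re l\<bar>" using l by simp
  have "\<bar>Re l\<bar> \<le> \<bar>Re (mu - l)\<bar>" using l mu by simp
  also have "\<dots> \<le> cmod (mu - l)" by (rule abs_Re_le_cmod)
  finally have "cmod l / cmod (mu - l) \<le> cmod l / \<bar>Re l\<bar>"
    using frac_le[OF norm_ge_zero order_refl pos] by blast
  also have "\<dots> \<le> 1 + k"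
    using norm_div_abs_Re_le_sector[OF _ sector] l by simp
  finally show ?thesis .
qed

lemma resolvent_Bop_bounded:
  fixes lam :: "nat \<Rightarrow> complex"
  assumes neg: "\<forall>n. Re (lam n) < 0" and k: "0 \<le> k"
    and sector: "\<forall>n. \<bar>Im (lam n)\<bar> \<le> k * \<bar>Re (lam n)\<bar>"
    and mu: "0 < Re mu" and x: "is_ell2 x"
  shows "is_ell2 (resolvent_m1 lam mu (Bop lam x))"
    and "ell2_norm (resolvent_m1 lam mu (Bop lam x)) \<le> (1 + k) * ell2_norm x"
proof -
  have "cmod (resolvent_m1 lam mu (Bop lam x) n) \<le> (1 + k) * cmod (x n)" for n
    using mult_right_mono[OF norm_div_diff_le_sector[OF _ mu, of "lam n" k] norm_ge_zero[of "x n"]]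
      neg sector
    by (simp add: resolvent_m1_def Bop_def norm_mult norm_divide)
  then show "is_ell2 (resolvent_m1 lam mu (Bop lam x))"
    and "ell2_norm (resolvent_m1 lam mu (Bop lam x)) \<le> (1 + k) * ell2_norm x"
    using ell2_pointwise_dominated[OF x, of "1 + k"] k by auto
qed

lemma Linf_admissible_rank_one:
  fixes lam :: "nat \<Rightarrow> complex"
  assumes neg: "\<forall>n. Re (lam n) < 0" and k: "0 \<le> k"
    and sector: "\<forall>n. \<bar>Im (lam n)\<bar> \<le> k * \<bar>Re (lam n)\<bar>"
    and x: "is_ell2 x"
  shows "Linf_admissible lam (\<lambda>(z::complex) n. z * Bop lam x n) Linf_scalar"
  unfolding Linf_admissible_def
proof (intro allI impI)
  fix t :: real and v :: "real \<Rightarrow> complex"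
  assume t: "0 < t" and v: "Linf_scalar t v"
  obtain M where M: "0 \<le> M" and v_le: "AE s in lborel. s \<in> {0..t} \<longrightarrow> cmod (v s) \<le> M"
  proof -
    from v obtain M where "AE s in lborel. s \<in> {0..t} \<longrightarrow> cmod (v s) \<le> M"
      unfolding Linf_scalar_def by blast
    then have "AE s in lborel. s \<in> {0..t} \<longrightarrow> cmod (v s) \<le> max M 0"
      by eventually_elim auto
    then show thesis by (rule that[rotated]) simp
  qed
  have "cmod (ctrl_integral lam (\<lambda>z n. z * Bop lam x n) t v n) \<le> M * (1 + k) * cmod (x n)" for n
  proof -
    have "AE s in lborel. s \<in> {0..t} \<longrightarrow> cmod (v s * (lam n * x n)) \<le> M * cmod (lam n * x n)"
      using v_le by eventually_elim (auto simp: norm_mult intro: mult_right_mono)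
    then have "cmod (ctrl_integral lam (\<lambda>z n. z * Bop lam x n) t v n)
        \<le> M * cmod (lam n * x n) / \<bar>Re (lam n)\<bar>"
      unfolding ctrl_integral_def Bop_def
      using norm_set_integral_exp_mult_le[of "lam n" t] neg t M by simp
    also have "\<dots> = M * cmod (x n) * (cmod (lam n) / \<bar>Re (lam n)\<bar>)"
      by (simp add: norm_mult)
    also have "\<dots> \<le> M * cmod (x n) * (1 + k)"
      using norm_div_abs_Re_le_sector[of "lam n" k] neg sector M
      by (intro mult_left_mono) (auto simp: less_imp_neq)
    finally show ?thesis by (simp add: mult_ac)
  qed
  then show "is_ell2 (ctrl_integral lam (\<lambda>z n. z * Bop lam x n) t v)"
    using ell2_pointwise_dominated(1)[OF x, of "M * (1 + k)"] M k by simp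
qed

lemma lacunary_subseq:
  fixes r :: "nat \<Rightarrow> real"
  assumes r: "filterlim r at_top sequentially" and c: "1 \<le> c" and a: "0 \<le> a"
  obtains g :: "nat \<Rightarrow> nat" where "strict_mono g" and "\<And>j. a \<le> r (g j)"
    and "\<And>i j. i < j \<Longrightarrow> c * r (g i) \<le> r (g j)"
proof -
  have big: "\<exists>n>m. B \<le> r n" for m B
  proof -
    have "eventually (\<lambda>n. B \<le> r n) sequentially" using r by (simp add: filterlim_at_top)
    then obtain N where N: "\<And>n. N \<le> n \<Longrightarrow> B \<le> r n" by (auto simp: eventually_sequentially)
    show ?thesis using N[of "max N (Suc m)"] by (intro exI[of _ "max N (Suc m)"]) auto
  qed
  have start: "\<exists>n. a \<le> r n" using big by blast
  have step: "\<exists>n'. a \<le> r n' \<and> n < n' \<and> c * r n \<le> r n'" if "a \<le> r n" for n and j :: nat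
    using big[of n "max a (c * r n)"] by auto
  obtain g where g: "\<And>j. a \<le> r (g j)" "\<And>j. g j < g (Suc j)" "\<And>j. c * r (g j) \<le> r (g (Suc j))"
    using dependent_nat_choice[of "\<lambda>_ n. a \<le> r n" "\<lambda>_ n n'. n < n' \<and> c * r n \<le> r n'", OF start step]
    by blast
  have growth: "c * r (g i) \<le> r (g j)" if "i < j" for i j
    using that
  proof (induction j)
    case (Suc j)
    show ?case
    proof (cases "i = j")
      case True
      then show ?thesis using g(3)[of j] by simp
    next
      case False
      then have "c * r (g i) \<le> r (g j)" using Suc by simp
      also have "\<dots> \<le> c * r (g j)" using mult_right_mono[OF c g(1)[of j, THEN order_trans[OF a]]] by simp
      also have "\<dots> \<le> r (g (Suc j))" by (rule g(3))
      finally show ?thesis .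
    qed
  qed simp
  have "strict_mono g" using g(2) by (simp add: strict_mono_Suc_iff)
  show thesis by (rule that[OF \<open>strict_mono g\<close> g(1) growth])
qed

lemma disjoint_family_inverse_windows:
  fixes \<rho> :: "nat \<Rightarrow> real"
  assumes pos: "\<And>j. 0 < \<rho> j" and growth: "\<And>i j. i < j \<Longrightarrow> 2 * \<rho> i < \<rho> j"
  shows "disjoint_family (\<lambda>j. {1 / \<rho> j..2 / \<rho> j})"
proof -
  have win: "{1 / \<rho> i..2 / \<rho> i} \<inter> {1 / \<rho> j..2 / \<rho> j} = {}" if "i < j" for i j
  proof -
    have "2 / \<rho> j < 1 / \<rho> i"
      using pos[of i] pos[of j] growth[OF that] by (simp add: divide_simps)
    then show ?thesis by auto
  qed
  show ?thesis
    unfolding disjoint_family_on_def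
  proof (intro ballI impI)
    fix i j :: nat assume "i \<noteq> j"
    then consider "i < j" | "j < i" by linarith
    then show "{1 / \<rho> i..2 / \<rho> i} \<inter> {1 / \<rho> j..2 / \<rho> j} = {}"
      by cases (use win[of i j] win[of j i] in auto)
  qed
qed

lemma lacunary_inverse_windows:
  fixes r :: "nat \<Rightarrow> real"
  assumes r: "filterlim r at_top sequentially" and r_pos: "\<And>n. 0 < r n"
  obtains g :: "nat \<Rightarrow> nat" where "strict_mono g"
    and "disjoint_family (\<lambda>j. {1 / r (g j)..2 / r (g j)})"
    and "\<And>j. {1 / r (g j)..2 / r (g j)} \<subseteq> {0..1}"
proof -
  obtain g :: "nat \<Rightarrow> nat" where g: "strict_mono g" and g_ge: "\<And>j. 2 \<le> r (g j)"
    and g_growth: "\<And>i j. i < j \<Longrightarrow> 4 * r (g i) \<le> r (g j)"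
    using r by (rule lacunary_subseq[where c = 4 and a = 2]) auto
  have "disjoint_family (\<lambda>j. {1 / r (g j)..2 / r (g j)})"
  proof (rule disjoint_family_inverse_windows)
    show "\<And>j. 0 < r (g j)" by (rule r_pos)
    show "2 * r (g i) < r (g j)" if "i < j" for i j
      using g_growth[OF that] r_pos[of "g i"] by linarith
  qed
  moreover have "{1 / r (g j)..2 / r (g j)} \<subseteq> {0..1}" for j
    using g_ge[of j] r_pos[of "g j"] by (auto simp: divide_simps)
  ultimately show thesis by (rule that[OF g])
qed

lemma borel_measurable_cnj_sgn:
  fixes f :: "'a \<Rightarrow> complex"
  assumes "f \<in> borel_measurable M"
  shows "(\<lambda>x. cnj (sgn (f x))) \<in> borel_measurable M"
proof -
  have "(\<lambda>x. sgn (f x)) \<in> borel_measurable M"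
    using assms by (rule measurable_compose[OF _ borel_measurable_sgn])
  then show ?thesis
    by (rule borel_measurable_continuous_on[where f = cnj, rotated]) (intro continuous_intros)
qed

lemma set_integral_norm_exp_mult_ge:
  fixes l :: complex
  assumes l: "Re l < 0"
  shows "exp (-2) \<le> (LINT s:{1 / \<bar>Re l\<bar>..2 / \<bar>Re l\<bar>}|lborel. cmod (exp (complex_of_real s * l) * l))"
proof -
  define r where "r = \<bar>Re l\<bar>"
  have r: "0 < r" using l by (simp add: r_def)
  have "exp (-2) = (LINT s:{1 / r..2 / r}|lborel. exp (-2) * r)"
    using r by (simp add: set_integral_const emeasure_lborel_Icc_eq divide_simps)
  also have "\<dots> \<le> (LINT s:{1 / r..2 / r}|lborel. cmod (exp (complex_of_real s * l) * l))"
  proof (rule set_integral_mono)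
    show "set_integrable lborel {1 / r..2 / r} (\<lambda>s. exp (-2) * r)"
      by (intro borel_integrable_atLeastAtMost' continuous_intros)
    show "set_integrable lborel {1 / r..2 / r} (\<lambda>s. cmod (exp (complex_of_real s * l) * l))"
      by (intro borel_integrable_atLeastAtMost' continuous_intros)
    fix s assume "s \<in> {1 / r..2 / r}"
    then have "- 2 \<le> - (s * r)" using r by (simp add: divide_simps)
    moreover have "r \<le> cmod l" using abs_Re_le_cmod[of l] by (simp add: r_def)
    moreover have "cmod (exp (complex_of_real s * l)) = exp (- (s * r))"
      using l by (simp add: r_def)
    ultimately show "exp (-2) * r \<le> cmod (exp (complex_of_real s * l) * l)"
      using r by (simp add: norm_mult mult_mono)
  qed
  finally show ?thesis by (simp add: r_def)
qed

lemma Linf_ell2_disjoint_windows: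
  fixes f :: "real \<Rightarrow> nat \<Rightarrow> complex" and I :: "nat \<Rightarrow> real set" and g :: "nat \<Rightarrow> nat"
  assumes I: "disjoint_family I" and I_borel: "\<And>j. I j \<in> sets borel"
    and f_meas: "\<And>n. (\<lambda>s. f s n) \<in> borel_measurable borel" and f_le: "\<And>s n. cmod (f s n) \<le> 1"
  shows "Linf_ell2 t (\<lambda>s n. if \<exists>j. n = g j \<and> s \<in> I j then f s n else 0)"
  unfolding Linf_ell2_def
proof (intro conjI allI exI)
  fix n
  have "(\<Union>j\<in>{j. n = g j}. I j) \<in> sets borel"
    using I_borel by (intro sets.countable_UN') auto
  then have "(\<lambda>s. if s \<in> (\<Union>j\<in>{j. n = g j}. I j) then f s n else 0) \<in> borel_measurable borel"
    using f_meas by (intro measurable_If_set) auto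
  then show "set_borel_measurable lborel {0..t} (\<lambda>s. if \<exists>j. n = g j \<and> s \<in> I j then f s n else 0)"
    unfolding set_borel_measurable_def by (intro borel_measurable_scaleR) auto
next
  show "AE s in lborel. s \<in> {0..t} \<longrightarrow>
      is_ell2 (\<lambda>n. if \<exists>j. n = g j \<and> s \<in> I j then f s n else 0) \<and>
      ell2_norm (\<lambda>n. if \<exists>j. n = g j \<and> s \<in> I j then f s n else 0) \<le> 1"
  proof (rule AE_I2, rule impI)
    fix s
    obtain m where "\<And>n. n \<noteq> m \<Longrightarrow> \<not> (\<exists>j. n = g j \<and> s \<in> I j)"
    proof (cases "\<exists>j. s \<in> I j")
      case True
      then obtain j where "s \<in> I j" by blast
      have uniq: "j' = j" if "s \<in> I j'" for j'
      proof (rule ccontr)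
        assume "j' \<noteq> j"
        then have "I j' \<inter> I j = {}" using I by (simp add: disjoint_family_on_def)
        then show False using that \<open>s \<in> I j\<close> by blast
      qed
      show thesis
      proof (rule that[of "g j"])
        fix n assume "n \<noteq> g j"
        then show "\<not> (\<exists>j'. n = g j' \<and> s \<in> I j')" using uniq by blast
      qed
    qed auto
    then have "\<And>n. n \<noteq> m \<Longrightarrow> (if \<exists>j. n = g j \<and> s \<in> I j then f s n else 0) = 0"
      by auto
    moreover have "cmod (if \<exists>j. m = g j \<and> s \<in> I j then f s m else 0) \<le> 1"
      using f_le by simp
    ultimately show "is_ell2 (\<lambda>n. if \<exists>j. n = g j \<and> s \<in> I j then f s n else 0) \<and>
        ell2_norm (\<lambda>n. if \<exists>j. n = g j \<and> s \<in> I j then f s n else 0) \<le> 1"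
      using ell2_single[of m "\<lambda>n. if \<exists>j. n = g j \<and> s \<in> I j then f s n else 0"] by blast
  qed
qed

lemma ctrl_integral_Bop_phase_aligned:
  fixes lam :: "nat \<Rightarrow> complex"
  assumes I: "I \<subseteq> {0..t}"
    and u: "\<And>s. u s n = (if s \<in> I then cnj (sgn (exp (complex_of_real s * lam n) * lam n)) else 0)"
  shows "ctrl_integral lam (Bop lam) t u n
    = complex_of_real (LINT s:I|lborel. cmod (exp (complex_of_real s * lam n) * lam n))"
proof -
  have "ctrl_integral lam (Bop lam) t u n
      = (LINT s|lborel. complex_of_real (indicator I s * cmod (exp (complex_of_real s * lam n) * lam n)))"
    unfolding ctrl_integral_def set_lebesgue_integral_def Bop_def
    using I by (intro Bochner_Integration.integral_cong)
      (auto simp: u indicator_def mult.assoc[symmetric] mult_cnj_sgn)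
  also have "\<dots> = complex_of_real (LINT s|lborel. indicator I s * cmod (exp (complex_of_real s * lam n) * lam n))"
    by (rule integral_complex_of_real)
  finally show ?thesis
    unfolding set_lebesgue_integral_def real_scaleR_def .
qed

lemma not_Linf_admissible_Bop:
  fixes lam :: "nat \<Rightarrow> complex"
  assumes neg: "\<forall>n. Re (lam n) < 0"
    and lim: "filterlim (\<lambda>n. Re (lam n)) at_bot sequentially"
  shows "\<not> Linf_admissible lam (Bop lam) Linf_ell2"
proof
  assume adm: "Linf_admissible lam (Bop lam) Linf_ell2"
  define r where "r n = \<bar>Re (lam n)\<bar>" for n
  have r_pos: "0 < r n" for n using neg[rule_format, of n] by (simp add: r_def)
  have "r = (\<lambda>n. - Re (lam n))"
    using neg by (simp add: r_def fun_eq_iff abs_of_neg)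
  then have "filterlim r at_top sequentially"
    using lim by (simp add: filterlim_uminus_at_top)
  then obtain g :: "nat \<Rightarrow> nat" where g: "strict_mono g"
    and I_disj: "disjoint_family (\<lambda>j. {1 / r (g j)..2 / r (g j)})"
    and I_sub: "\<And>j. {1 / r (g j)..2 / r (g j)} \<subseteq> {0..1}"
    by (rule lacunary_inverse_windows[OF _ r_pos]) auto
  define I where "I = (\<lambda>j. {1 / r (g j)..2 / r (g j)})"
  define w where "w s n = exp (complex_of_real s * lam n) * lam n" for s n
  define u where "u s n = (if \<exists>j. n = g j \<and> s \<in> I j then cnj (sgn (w s n)) else 0)" for s n
  have "Linf_ell2 1 u"
    unfolding u_def
  proof (rule Linf_ell2_disjoint_windows)
    show "disjoint_family I" using I_disj by (simp add: I_def)
    show "\<And>j. I j \<in> sets borel" by (simp add: I_def)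
    show "\<And>n. (\<lambda>s. cnj (sgn (w s n))) \<in> borel_measurable borel"
      unfolding w_def by (intro borel_measurable_cnj_sgn borel_measurable_continuous_onI continuous_intros)
    show "\<And>s n. cmod (cnj (sgn (w s n))) \<le> 1" by (simp add: norm_sgn)
  qed
  define c where "c = ctrl_integral lam (Bop lam) 1 u"
  have "is_ell2 c"
    using adm \<open>Linf_ell2 1 u\<close> by (simp add: Linf_admissible_def c_def)
  then have "(\<lambda>j. c (g j)) \<longlonglongrightarrow> 0"
    using LIMSEQ_subseq_LIMSEQ[OF is_ell2_LIMSEQ_zero g] by (simp add: o_def)
  then have c_lim: "(\<lambda>j. cmod (c (g j))) \<longlonglongrightarrow> 0"
    by (rule tendsto_norm_zero)
  have c_ge: "exp (-2) \<le> cmod (c (g j))" for j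
  proof -
    have "u s (g j) = (if s \<in> I j then cnj (sgn (w s (g j))) else 0)" for s
      using strict_mono_eq[OF g] by (auto simp: u_def)
    then have "c (g j) = complex_of_real (LINT s:I j|lborel. cmod (w s (g j)))"
      unfolding c_def w_def using I_sub[of j] by (intro ctrl_integral_Bop_phase_aligned) (simp_all add: I_def)
    then show ?thesis
      using set_integral_norm_exp_mult_ge[of "lam (g j)"] neg
      by (simp add: I_def r_def w_def)
  qed
  have "exp (-2) \<le> (0::real)"
    using LIMSEQ_le_const[OF c_lim] c_ge by blast
  then show False by simp
qed

theorem proposition14:
  fixes lam :: "nat \<Rightarrow> complex" and k :: real
  assumes neg: "\<forall>n. Re (lam n) < 0"
    and mono: "decseq (\<lambda>n. Re (lam n))"
    and lim: "filterlim (\<lambda>n. Re (lam n)) at_bot sequentially"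
    and kpos: "k > 0"
    and sector: "\<forall>n. \<bar>Im (lam n)\<bar> \<le> k * \<bar>Re (lam n)\<bar>"
  shows "(\<forall>u. is_ell2 u \<longrightarrow>
            Linf_admissible lam (\<lambda>(z::complex) n. z * Bop lam u n) Linf_scalar)
       \<and> \<not> Linf_admissible lam (Bop lam) Linf_ell2
       \<and> (\<exists>C. \<forall>mu. Re mu > 0 \<longrightarrow>
              (\<forall>x. is_ell2 x \<longrightarrow> is_ell2 (resolvent_m1 lam mu (Bop lam x))
                     \<and> ell2_norm (resolvent_m1 lam mu (Bop lam x)) \<le> C * ell2_norm x))"
proof (intro conjI allI impI exI)
  have k: "0 \<le> k" using kpos by simp
  show "Linf_admissible lam (\<lambda>(z::complex) n. z * Bop lam u n) Linf_scalar" if "is_ell2 u" for u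
    using Linf_admissible_rank_one[OF neg k sector that] .
  show "\<not> Linf_admissible lam (Bop lam) Linf_ell2"
    using not_Linf_admissible_Bop[OF neg lim] .
  fix mu x assume "0 < Re mu" "is_ell2 x"
  from resolvent_Bop_bounded[OF neg k sector this]
  show "is_ell2 (resolvent_m1 lam mu (Bop lam x))"
    and "ell2_norm (resolvent_m1 lam mu (Bop lam x)) \<le> (1 + k) * ell2_norm x" .
qed

end
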